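(* Fix $a\in\mathbb R$, $b>0$, $c>0$ and a mean $M_1$. Consider the two-player Bayesian contest with efforts restricted to $[0,\infty)$ in which cost types are i.i.d. draws from a distribution $F$ with support $[\alpha,\beta]\subset(0,c)$, mean $M_1$ and variance $\sigma_\theta^2>0$, and a type-$\theta$ player choosing $\tilde x$ against opponent strategy $x(\cdot)$ receives $\int[P(\tilde x,x(\theta'))-\theta\tilde x]\,dF(\theta')$ with $P(x,y)=\tfrac12+(x-y)\bigl(c-b(x+y)+axy\bigr)$. Restrict attention to priors $F$ for which the contest is fully active, meaning that the unique symmetric Bayesian Nash equilibrium $x_F$ of the affine relaxation (actions in $\mathbb R$; for $a=0$ it is $x_F(\theta)=\frac{c-\theta}{2b}$) is nonnegative on $[\alpha,\beta]$, so that it is an equilibrium with nonnegative efforts. Then, among such fully active priors with mean $M_1$, expected equilibrium effort $E_F[x_F(\theta)]$ is decreasing in the type variance $\sigma_\theta^2$ if $a>0$ (suppression), increasing in $\sigma_\theta^2$ if $a<0$ (empowerment), and independent of $\sigma_\theta^2$ if $a=0$.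
   Context: The affine relaxation is the same Bayesian contest with actions allowed in all of $\mathbb R$ and the raw (untruncated) $P$. For $a\neq0$ its unique symmetric equilibrium is affine in type and its expected effort depends on $F$ only through its mean and variance. *)

theory Defs
  imports "HOL-Probability.Probability"
begin

definition contest_P :: "real \<Rightarrow> real \<Rightarrow> real \<Rightarrow> real \<Rightarrow> real \<Rightarrow> real" where
  "contest_P a b c x y = 1/2 + (x - y) * (c - b * (x + y) + a * x * y)"

definition measure_support :: "real measure \<Rightarrow> real set" where
  "measure_support F = {t. \<forall>e>0. emeasure F (ball t e) > 0}"

definition admissible_prior :: "real \<Rightarrow> real \<Rightarrow> real measure \<Rightarrow> real \<Rightarrow> bool" where
  "admissible_prior c M1 F s2 \<longleftrightarrow>
     prob_space F \<and> sets F = sets borel \<and>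
     (\<exists>\<alpha> \<beta>. 0 < \<alpha> \<and> \<alpha> \<le> \<beta> \<and> \<beta> < c \<and> measure_support F = {\<alpha>..\<beta>}) \<and>
     (\<integral>t. t \<partial>F) = M1 \<and> (\<integral>t. (t - M1)^2 \<partial>F) = s2 \<and> s2 > 0"

definition exp_payoff :: "real \<Rightarrow> real \<Rightarrow> real \<Rightarrow> real measure \<Rightarrow> (real \<Rightarrow> real) \<Rightarrow> real \<Rightarrow> real \<Rightarrow> real" where
  "exp_payoff a b c F x \<theta> y = (\<integral>t. contest_P a b c y (x t) \<partial>F) - \<theta> * y"

definition relaxed_sym_BNE :: "real \<Rightarrow> real \<Rightarrow> real \<Rightarrow> real measure \<Rightarrow> (real \<Rightarrow> real) \<Rightarrow> bool" where
  "relaxed_sym_BNE a b c F x \<longleftrightarrow>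
     x \<in> borel_measurable F \<and> integrable F x \<and> integrable F (\<lambda>t. (x t)^2) \<and>
     (\<forall>\<theta>\<in>measure_support F. \<forall>y::real. exp_payoff a b c F x \<theta> y \<le> exp_payoff a b c F x \<theta> (x \<theta>))"

definition fully_active :: "real measure \<Rightarrow> (real \<Rightarrow> real) \<Rightarrow> bool" where
  "fully_active F x \<longleftrightarrow> (\<forall>\<theta>\<in>measure_support F. 0 \<le> x \<theta>)"

end

theory Submission
  imports Defs
begin

text \<open>Against a fixed opponent strategy x, the expected payoff of a type is a quadratic in its own
  effort that depends on x only through the moments m = E x and q = E x^2. Every type in the
  support best-responds, so the equilibrium is affine there:
  \<theta> = c - a q - 2 (b - a m) x(\<theta>). Taking the mean and variance of this identity under F gives
  M1 = c - a q - 2 (b - a m) m and \<sigma>^2 = 4 (b - a m)^2 (q - m^2), so m solves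
  c - M1 = 2 b m - a m^2 + a \<sigma>^2 / (4 (b - a m)^2). For fixed left-hand side, raising
  \<sigma>^2 forces m to move against the sign of a.\<close>

lemma AE_in_measure_support:
  assumes "sets F = sets borel"
  shows "AE t in F. t \<in> measure_support F"
proof -
  define FF where "FF = {ball t e | t e. e > 0 \<and> emeasure F (ball t e) = 0}"
  have "\<And>S. S \<in> FF \<Longrightarrow> open S" by (auto simp: FF_def)
  then obtain GG where GG: "GG \<subseteq> FF" "countable GG" "\<Union>GG = \<Union>FF" using Lindelof by metis
  have "(\<Union>S\<in>GG. S) \<in> null_sets F"
  proof (rule null_sets_UN'[OF \<open>countable GG\<close>])
    fix S assume "S \<in> GG"
    then obtain t e where "S = ball t e" "emeasure F (ball t e) = 0"
      using GG(1) by (auto simp: FF_def)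
    then show "S \<in> null_sets F" using assms by (simp add: null_sets_def)
  qed
  then have "AE t in F. t \<notin> \<Union>FF" using GG(3) by (auto dest: AE_not_in)
  then show ?thesis
  proof (rule eventually_mono)
    fix t assume t: "t \<notin> \<Union>FF"
    show "t \<in> measure_support F" unfolding measure_support_def
    proof (intro CollectI allI impI)
      fix e :: real assume "e > 0"
      with t have "ball t e \<notin> FF" by auto
      with \<open>e > 0\<close> show "0 < emeasure F (ball t e)" by (auto simp: FF_def zero_less_iff_neq_zero)
    qed
  qed
qed

lemma quadratic_nonpos_imp_coeffs:
  fixes p k :: real
  assumes le0: "\<And>t. t * p - k * t\<^sup>2 \<le> 0"
  shows "0 \<le> k \<and> p = 0"
proof -
  have k: "0 \<le> k" using le0[of 1] le0[of "-1"] by simp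
  define t where "t = p / (k + 1)"
  have p: "p = (k + 1) * t" using k by (simp add: t_def)
  have "t * p - k * t\<^sup>2 = t\<^sup>2" by (simp add: p algebra_simps power2_eq_square)
  then have "t = 0" using le0[of t] by simp
  with k p show ?thesis by simp
qed

lemma exp_payoff_eq_moments:
  assumes "prob_space F" and "integrable F x" and "integrable F (\<lambda>t. (x t)\<^sup>2)"
  shows "exp_payoff a b c F x \<theta> y =
    1/2 + c*y - b*y\<^sup>2 + (a*y\<^sup>2 - c) * (\<integral>t. x t \<partial>F) + (b - a*y) * (\<integral>t. (x t)\<^sup>2 \<partial>F) - \<theta>*y"
proof -
  interpret prob_space F by fact
  have "(\<lambda>t. contest_P a b c y (x t)) =
      (\<lambda>t. (1/2 + c*y - b*y\<^sup>2) + ((a*y\<^sup>2 - c) * x t + (b - a*y) * (x t)\<^sup>2))"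
    by (simp add: contest_P_def algebra_simps power2_eq_square)
  then show ?thesis
    using assms(2,3) by (simp add: exp_payoff_def prob_space)
qed

lemma relaxed_sym_BNE_best_response:
  assumes "prob_space F" and bne: "relaxed_sym_BNE a b c F x" and \<theta>: "\<theta> \<in> measure_support F"
  defines "m \<equiv> \<integral>t. x t \<partial>F" and "q \<equiv> \<integral>t. (x t)\<^sup>2 \<partial>F"
  shows "0 \<le> b - a*m \<and> \<theta> = c - a*q - 2 * (b - a*m) * x \<theta>"
proof -
  have ix: "integrable F x" and iq: "integrable F (\<lambda>t. (x t)\<^sup>2)"
    and br: "\<And>y. exp_payoff a b c F x \<theta> y \<le> exp_payoff a b c F x \<theta> (x \<theta>)"
    using bne \<theta> unfolding relaxed_sym_BNE_def by blast+
  have "t * (c - a*q - \<theta> - 2 * (b - a*m) * x \<theta>) - (b - a*m) * t\<^sup>2 \<le> 0" for t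
  proof -
    have "exp_payoff a b c F x \<theta> (x \<theta> + t) - exp_payoff a b c F x \<theta> (x \<theta>) =
        t * (c - a*q - \<theta> - 2 * (b - a*m) * x \<theta>) - (b - a*m) * t\<^sup>2"
      unfolding exp_payoff_eq_moments[OF \<open>prob_space F\<close> ix iq] m_def q_def
      by (simp add: algebra_simps power2_eq_square)
    then show ?thesis using br[of "x \<theta> + t"] by linarith
  qed
  from quadratic_nonpos_imp_coeffs[OF this] show ?thesis by auto
qed

lemma affine_image_moments:
  fixes x y :: "'a \<Rightarrow> real"
  assumes "prob_space F" and ix: "integrable F x" and iq: "integrable F (\<lambda>t. (x t)\<^sup>2)"
    and y: "y \<in> borel_measurable F" and AE: "AE t in F. y t = A - B * x t"
  defines "m \<equiv> \<integral>t. x t \<partial>F" and "q \<equiv> \<integral>t. (x t)\<^sup>2 \<partial>F"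
  shows "(\<integral>t. y t \<partial>F) = A - B*m"
    and "(\<integral>t. (y t - (A - B*m))\<^sup>2 \<partial>F) = B\<^sup>2 * (q - m\<^sup>2)"
proof -
  have x: "x \<in> borel_measurable F" using ix by simp
  have affine: "(\<lambda>t. A - B * x t) \<in> borel_measurable F" using x by simp
  interpret prob_space F by fact
  have "(\<integral>t. y t \<partial>F) = (\<integral>t. A - B * x t \<partial>F)"
    using AE y affine by (intro integral_cong_AE) auto
  also have "\<dots> = A - B*m" using ix by (simp add: m_def prob_space)
  finally show "(\<integral>t. y t \<partial>F) = A - B*m" .
  have "(\<integral>t. (y t - (A - B*m))\<^sup>2 \<partial>F) = (\<integral>t. B\<^sup>2 * m\<^sup>2 + ((- 2 * B\<^sup>2 * m) * x t + B\<^sup>2 * (x t)\<^sup>2) \<partial>F)"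
    using AE y x
    by (intro integral_cong_AE) (auto elim!: eventually_mono simp: algebra_simps power2_eq_square)
  also have "\<dots> = B\<^sup>2 * (q - m\<^sup>2)"
    using ix iq by (simp add: prob_space m_def q_def algebra_simps power2_eq_square)
  finally show "(\<integral>t. (y t - (A - B*m))\<^sup>2 \<partial>F) = B\<^sup>2 * (q - m\<^sup>2)" .
qed

definition mean_effort_map :: "real \<Rightarrow> real \<Rightarrow> real \<Rightarrow> real \<Rightarrow> real" where
  "mean_effort_map a b m s = 2*b*m - a*m\<^sup>2 + a * s / (4 * (b - a*m)\<^sup>2)"

lemma relaxed_sym_BNE_mean_effort:
  assumes adm: "admissible_prior c M1 F s" and bne: "relaxed_sym_BNE a b c F x"
  defines "m \<equiv> \<integral>t. x t \<partial>F"
  shows "0 < b - a*m \<and> c - M1 = mean_effort_map a b m s"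
proof -
  obtain \<alpha> \<beta> where ps: "prob_space F" and sF: "sets F = sets borel"
    and supp: "\<alpha> \<le> \<beta>" "measure_support F = {\<alpha>..\<beta>}"
    and M1: "(\<integral>t. t \<partial>F) = M1" and s: "(\<integral>t. (t - M1)\<^sup>2 \<partial>F) = s" "0 < s"
    using adm unfolding admissible_prior_def by blast
  have ix: "integrable F x" and iq: "integrable F (\<lambda>t. (x t)\<^sup>2)"
    using bne unfolding relaxed_sym_BNE_def by blast+
  define q where "q = (\<integral>t. (x t)\<^sup>2 \<partial>F)"
  define k where "k = b - a*m"
  note best_response = relaxed_sym_BNE_best_response[OF ps bne, folded m_def q_def k_def]
  have "0 \<le> k" using best_response[of \<alpha>] supp by simp
  have "AE t in F. t = (c - a*q) - (2*k) * x t"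
    using AE_in_measure_support[OF sF] by (rule eventually_mono) (use best_response in auto)
  moreover have "(\<lambda>t. t) \<in> borel_measurable F"
    unfolding measurable_cong_sets[OF sF refl] by simp
  ultimately have "M1 = (c - a*q) - 2*k*m" and "s = (2*k)\<^sup>2 * (q - m\<^sup>2)"
    using affine_image_moments[OF ps ix iq, of "\<lambda>t. t", folded m_def q_def] M1 s by auto
  moreover from this \<open>0 < s\<close> \<open>0 \<le> k\<close> have "0 < k" by (cases "k = 0") auto
  ultimately have "q = m\<^sup>2 + s / (4 * k\<^sup>2)" and "c - M1 = a*q + 2*k*m"
    by (simp_all add: field_simps)
  moreover have "b = k + a*m" by (simp add: k_def)
  ultimately show ?thesis
    using \<open>0 < k\<close> by (simp add: mean_effort_map_def algebra_simps power2_eq_square)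
qed

lemma mean_effort_map_diff:
  "mean_effort_map a b u2 s2 - mean_effort_map a b u1 s1 =
    (u2 - u1) * ((b - a*u1) + (b - a*u2)) + a/4 * (s2 / (b - a*u2)\<^sup>2 - s1 / (b - a*u1)\<^sup>2)"
  by (simp add: mean_effort_map_def algebra_simps power2_eq_square)

lemma divide_power2_less_divide_power2:
  fixes k1 k2 s1 s2 :: real
  assumes "0 < k2" "k2 \<le> k1" "0 \<le> s1" "s1 < s2"
  shows "s1 / k1\<^sup>2 < s2 / k2\<^sup>2"
proof -
  have "s1 / k1\<^sup>2 \<le> s1 / k2\<^sup>2" using assms by (simp add: frac_le power_mono)
  also have "\<dots> < s2 / k2\<^sup>2" using assms by (simp add: divide_strict_right_mono)
  finally show ?thesis .
qed

lemma mean_effort_map_eq_imp_shift_opposes: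
  assumes eq: "mean_effort_map a b u1 s1 = mean_effort_map a b u2 s2"
    and "a \<noteq> 0" and "0 < b - a*u2" and "0 \<le> s1" and "s1 < s2"
  shows "a * (u2 - u1) < 0"
proof (rule ccontr)
  assume "\<not> a * (u2 - u1) < 0"
  then have shift: "0 \<le> a * (u2 - u1)" by simp
  define D where "D = s2 / (b - a*u2)\<^sup>2 - s1 / (b - a*u1)\<^sup>2"
  have "b - a*u2 \<le> b - a*u1" using shift by (simp add: algebra_simps)
  then have "0 < D"
    unfolding D_def using assms by (simp add: divide_power2_less_divide_power2)
  have "a * (mean_effort_map a b u2 s2 - mean_effort_map a b u1 s1) =
      a * (u2 - u1) * ((b - a*u1) + (b - a*u2)) + a\<^sup>2 / 4 * D"
    unfolding mean_effort_map_diff D_def[symmetric] by (simp add: distrib_left power2_eq_square)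
  also have "\<dots> > 0"
    using shift \<open>b - a*u2 \<le> b - a*u1\<close> \<open>0 < b - a*u2\<close> \<open>0 < D\<close> \<open>a \<noteq> 0\<close>
    by (simp add: add_nonneg_pos)
  finally show False using eq by simp
qed

theorem theorem4:
  fixes a b c M1 s1 s2 :: real and F1 F2 :: "real measure" and x1 x2 :: "real \<Rightarrow> real"
  assumes "b > 0" and "c > 0"
    and "admissible_prior c M1 F1 s1" and "admissible_prior c M1 F2 s2"
    and "relaxed_sym_BNE a b c F1 x1" and "relaxed_sym_BNE a b c F2 x2"
    and "fully_active F1 x1" and "fully_active F2 x2"
  shows "(a > 0 \<and> s1 < s2 \<longrightarrow> (\<integral>t. x2 t \<partial>F2) < (\<integral>t. x1 t \<partial>F1)) \<and>
         (a < 0 \<and> s1 < s2 \<longrightarrow> (\<integral>t. x1 t \<partial>F1) < (\<integral>t. x2 t \<partial>F2)) \<and>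
         (a = 0 \<longrightarrow> (\<integral>t. x1 t \<partial>F1) = (\<integral>t. x2 t \<partial>F2))"
proof -
  define u1 where "u1 = (\<integral>t. x1 t \<partial>F1)"
  define u2 where "u2 = (\<integral>t. x2 t \<partial>F2)"
  have e1: "c - M1 = mean_effort_map a b u1 s1"
    using relaxed_sym_BNE_mean_effort[OF assms(3,5)] by (simp add: u1_def)
  have "0 < b - a*u2" and e2: "c - M1 = mean_effort_map a b u2 s2"
    using relaxed_sym_BNE_mean_effort[OF assms(4,6)] by (simp_all add: u2_def)
  have "0 \<le> s1" using assms(3) by (simp add: admissible_prior_def)
  have shift: "a * (u2 - u1) < 0" if "a \<noteq> 0" and "s1 < s2"
    using mean_effort_map_eq_imp_shift_opposes[of a b u1 s1 u2 s2] e1 e2 that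
      \<open>0 < b - a*u2\<close> \<open>0 \<le> s1\<close> by simp
  have "u1 = u2" if "a = 0"
    using e1 e2 that \<open>b > 0\<close> by (simp add: mean_effort_map_def)
  moreover have "u2 < u1" if "a > 0" and "s1 < s2"
    using shift that by (simp add: mult_less_0_iff)
  moreover have "u1 < u2" if "a < 0" and "s1 < s2"
    using shift that by (simp add: mult_less_0_iff)
  ultimately show ?thesis unfolding u1_def[symmetric] u2_def[symmetric] by blast
qed

end
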